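(* Let $M\subset\mathbb R^2$ be open with coordinates $x=(x^1,x^2)$, let $\lambda_1,\lambda_2$ be smooth functions on $M$, and let $f(x,y)$ be a smooth function on $\mathcal TM$ positively homogeneous of degree 2 in $y=(y^1,y^2)$. Consider the spray of the system $\ddot x^1=\lambda_1(x)f(x,\dot x)$, $\ddot x^2=\lambda_2(x)f(x,\dot x)$. On any open set $U\subset\mathcal TM$ on which $(\lambda_1,\lambda_2)$ does not vanish and the third partial derivatives $\frac{\partial^3 f}{\partial y^i\partial y^j\partial y^k}$ do not all vanish at any point (i.e. $f$ is non-quadratic there), this spray is not Landsberg metrizable.
   Context: For a spray $S=y^i\frac{\partial}{\partial x^i}+f^i(x,y)\frac{\partial}{\partial y^i}$ (here $f^1=\lambda_1f$, $f^2=\lambda_2f$), put $\Gamma^i_j=-\frac12\frac{\partial f^i}{\partial y^j}$, $\Gamma^i_{jk}=\frac{\partial\Gamma^i_j}{\partial y^k}$. For $E$ smooth on $U$, $g_{ij}=\frac{\partial^2E}{\partial y^i\partial y^j}$. $S$ is Landsberg metrizable on $U$ if there is a smooth $E:U\to\mathbb R$ with $(g_{ij})$ positive definite satisfying (H) $y^i\frac{\partial E}{\partial y^i}-2E=0$, (EL) $y^j\frac{\partial^2E}{\partial x^j\partial y^i}+f^j\frac{\partial^2E}{\partial y^j\partial y^i}-\frac{\partial E}{\partial x^i}=0$ ($i=1,2$), and (Ls) $\frac{\partial g_{jk}}{\partial x^i}-\Gamma^l_i\frac{\partial g_{jk}}{\partial y^l}-\Gamma^l_{ik}g_{lj}-\Gamma^l_{ij}g_{lk}=0$.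 *)

theory Defs
  imports "HOL-Analysis.Analysis"
begin

definition pd :: "'a::euclidean_space \<Rightarrow> ('a \<Rightarrow> real) \<Rightarrow> 'a \<Rightarrow> real" where
  "pd b F p = deriv (\<lambda>t. F (p + t *\<^sub>R b)) 0"

fun iter_pd :: "'a::euclidean_space list \<Rightarrow> ('a \<Rightarrow> real) \<Rightarrow> 'a \<Rightarrow> real" where
  "iter_pd [] F = F"
| "iter_pd (b # bs) F = pd b (iter_pd bs F)"

definition smooth_on :: "'a::euclidean_space set \<Rightarrow> ('a \<Rightarrow> real) \<Rightarrow> bool" where
  "smooth_on U F \<longleftrightarrow>
     (\<forall>bs. set bs \<subseteq> Basis \<longrightarrow>
        continuous_on U (iter_pd bs F) \<and>
        (\<forall>b\<in>Basis. \<forall>p\<in>U. (\<lambda>t. iter_pd bs F (p + t *\<^sub>R b)) differentiable (at 0)))"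

(* Points of TM are pairs (x, y) with x = (x^1,x^2), y = (y^1,y^2); indices i \<in> {1,2} *)
type_synonym pt = "(real \<times> real) \<times> (real \<times> real)"

definition ex :: "nat \<Rightarrow> pt" where
  "ex i = (if i = 1 then ((1,0),(0,0)) else ((0,1),(0,0)))"

definition ey :: "nat \<Rightarrow> pt" where
  "ey i = (if i = 1 then ((0,0),(1,0)) else ((0,0),(0,1)))"

definition yc :: "nat \<Rightarrow> pt \<Rightarrow> real" where
  "yc i p = (if i = 1 then fst (snd p) else snd (snd p))"

definition dx :: "nat \<Rightarrow> (pt \<Rightarrow> real) \<Rightarrow> pt \<Rightarrow> real" where
  "dx i F = pd (ex i) F"

definition dy :: "nat \<Rightarrow> (pt \<Rightarrow> real) \<Rightarrow> pt \<Rightarrow> real" where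
  "dy i F = pd (ey i) F"

definition sprayf :: "(real \<times> real \<Rightarrow> real) \<Rightarrow> (real \<times> real \<Rightarrow> real) \<Rightarrow> (pt \<Rightarrow> real)
                      \<Rightarrow> nat \<Rightarrow> pt \<Rightarrow> real" where
  "sprayf l1 l2 f i p = (if i = 1 then l1 (fst p) else l2 (fst p)) * f p"

definition Gam :: "(real \<times> real \<Rightarrow> real) \<Rightarrow> (real \<times> real \<Rightarrow> real) \<Rightarrow> (pt \<Rightarrow> real)
                      \<Rightarrow> nat \<Rightarrow> nat \<Rightarrow> pt \<Rightarrow> real" where
  "Gam l1 l2 f i j p = - (1/2) * dy j (sprayf l1 l2 f i) p"

definition Gam3 :: "(real \<times> real \<Rightarrow> real) \<Rightarrow> (real \<times> real \<Rightarrow> real) \<Rightarrow> (pt \<Rightarrow> real)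
                      \<Rightarrow> nat \<Rightarrow> nat \<Rightarrow> nat \<Rightarrow> pt \<Rightarrow> real" where
  "Gam3 l1 l2 f i j k p = dy k (Gam l1 l2 f i j) p"

definition gmet :: "(pt \<Rightarrow> real) \<Rightarrow> nat \<Rightarrow> nat \<Rightarrow> pt \<Rightarrow> real" where
  "gmet E i j = dy i (dy j E)"

definition landsberg_metrizable ::
  "(real \<times> real \<Rightarrow> real) \<Rightarrow> (real \<times> real \<Rightarrow> real) \<Rightarrow> (pt \<Rightarrow> real) \<Rightarrow> pt set \<Rightarrow> bool" where
  "landsberg_metrizable l1 l2 f U \<longleftrightarrow>
     (\<exists>E. smooth_on U E \<and>
        (\<forall>p\<in>U.
           (\<forall>v::nat \<Rightarrow> real. (v 1, v 2) \<noteq> (0, 0) \<longrightarrow>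
              (\<Sum>i\<in>{1,2}. \<Sum>j\<in>{1,2}. gmet E i j p * v i * v j) > 0) \<and>
           (\<Sum>i\<in>{1,2}. yc i p * dy i E p) - 2 * E p = 0 \<and>
           (\<forall>i\<in>{1,2}.
              (\<Sum>j\<in>{1,2}. yc j p * dx j (dy i E) p)
              + (\<Sum>j\<in>{1,2}. sprayf l1 l2 f j p * dy j (dy i E) p)
              - dx i E p = 0) \<and>
           (\<forall>i\<in>{1,2}. \<forall>j\<in>{1,2}. \<forall>k\<in>{1,2}.
              dx i (gmet E j k) p
              - (\<Sum>l\<in>{1,2}. Gam l1 l2 f l i p * dy l (gmet E j k) p)
              - (\<Sum>l\<in>{1,2}. Gam3 l1 l2 f l i k p * gmet E l j p)
              - (\<Sum>l\<in>{1,2}. Gam3 l1 l2 f l i j p * gmet E l k p) = 0)))"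

end

theory Submission
  imports Defs
begin

text \<open>
Only the homogeneity condition (H) and the Landsberg condition (Ls) are used.

Write \<open>f\<^sub>i, f\<^sub>i\<^sub>j, f\<^sub>i\<^sub>j\<^sub>k\<close> for the \<open>y\<close>-derivatives of \<open>f\<close>, so that
\<open>G\<^sup>l\<^sub>i = -1/2 \<lambda>\<^sub>l f\<^sub>i\<close> and \<open>G\<^sup>l\<^sub>i\<^sub>j = -1/2 \<lambda>\<^sub>l f\<^sub>i\<^sub>j\<close>, and let
\<open>h = \<lambda>\<^sub>l \<partial>E/\<partial>y\<^sup>l\<close> (\<open>dE_lam\<close> below). Contracting (Ls) with \<open>y\<^sup>j y\<^sup>k\<close> and using
Euler's relation for \<open>E\<close> (degree 2) and for \<open>f\<^sub>i\<close> (degree 1) gives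
\<open>\<partial>E/\<partial>x\<^sup>i = G\<^sup>l\<^sub>i \<partial>E/\<partial>y\<^sup>l = -1/2 f\<^sub>i h\<close>. Differentiating this twice in \<open>y\<close> and
substituting back into (Ls), everything cancels except \<open>-1/2 f\<^sub>i\<^sub>j\<^sub>k h = 0\<close>. Where \<open>f\<close> is
non-quadratic this forces \<open>h = 0\<close>, hence \<open>\<lambda>\<^sub>l g\<^sub>l\<^sub>j = \<partial>h/\<partial>y\<^sup>j = 0\<close> and
\<open>g(\<lambda>, \<lambda>) = 0\<close>, contradicting positive definiteness.
\<close>

section \<open>Directional derivatives\<close>

text \<open>\<open>pd\<close> is defined through \<open>deriv\<close>, so it is meaningful only where the following holds.\<close>

definition differentiable_along :: "'a::euclidean_space \<Rightarrow> ('a \<Rightarrow> real) \<Rightarrow> 'a \<Rightarrow> bool" where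
  "differentiable_along b F q \<longleftrightarrow> (\<lambda>t. F (q + t *\<^sub>R b)) differentiable (at 0)"

lemma has_pd:
  "differentiable_along b F q \<Longrightarrow> ((\<lambda>t. F (q + t *\<^sub>R b)) has_real_derivative pd b F q) (at 0)"
  by (simp add: differentiable_along_def pd_def DERIV_deriv_iff_real_differentiable)

lemma pd_eqI:
  "((\<lambda>t. F (q + t *\<^sub>R b)) has_real_derivative D) (at 0) \<Longrightarrow> pd b F q = D"
  by (simp add: pd_def DERIV_imp_deriv)

lemma differentiable_alongI:
  "((\<lambda>t. F (q + t *\<^sub>R b)) has_real_derivative D) (at 0) \<Longrightarrow> differentiable_along b F q"
  unfolding differentiable_along_def using real_differentiable_def by blast

lemma has_pd_on_line:
  assumes "differentiable_along b F (w + s *\<^sub>R b)"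
  shows "((\<lambda>s. F (w + s *\<^sub>R b)) has_real_derivative pd b F (w + s *\<^sub>R b)) (at s)"
proof -
  have "(\<lambda>t. F (w + s *\<^sub>R b + t *\<^sub>R b)) = (\<lambda>t. F (w + (t + s) *\<^sub>R b))"
    by (simp add: scaleR_add_left algebra_simps)
  with has_pd[OF assms] show ?thesis
    using DERIV_shift[of "\<lambda>s. F (w + s *\<^sub>R b)" _ 0 s] by simp
qed

lemma eventually_line_in_open:
  fixes q b :: "'a::real_normed_vector"
  assumes "open U" "q \<in> U"
  shows "\<forall>\<^sub>F t in nhds 0. q + t *\<^sub>R b \<in> U"
proof -
  have "open ((\<lambda>t::real. q + t *\<^sub>R b) -` U)"
    by (rule open_vimage[OF assms(1)]) (intro continuous_intros)
  then show ?thesis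
    using assms(2) unfolding eventually_nhds by force
qed

lemma pd_cong_open:
  assumes "open U" "q \<in> U" "\<And>z. z \<in> U \<Longrightarrow> F z = G z"
  shows "pd b F q = pd b G q"
  unfolding pd_def
  by (rule deriv_cong_ev[OF _ refl])
    (use eventually_line_in_open[OF assms(1,2), of b] assms(3) in \<open>auto elim: eventually_mono\<close>)

lemma differentiable_along_cong_open:
  assumes "open U" "q \<in> U" "\<And>z. z \<in> U \<Longrightarrow> F z = G z"
  shows "differentiable_along b F q \<longleftrightarrow> differentiable_along b G q"
proof -
  have "\<forall>\<^sub>F t in nhds 0. F (q + t *\<^sub>R b) = G (q + t *\<^sub>R b)"
    using eventually_line_in_open[OF assms(1,2), of b] assms(3) by (auto elim: eventually_mono)
  from DERIV_cong_ev[OF refl this refl] show ?thesis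
    unfolding differentiable_along_def real_differentiable_def by blast
qed

lemma eventually_small_in_open:
  fixes q :: "'a::real_normed_vector"
  assumes "open S" "q \<in> S"
  shows "\<forall>\<^sub>F h in at (0::real). \<forall>z. norm z \<le> K * \<bar>h\<bar> \<longrightarrow> q + z \<in> S"
proof -
  obtain r where "r > 0" "ball q r \<subseteq> S"
    using assms open_contains_ball by blast
  moreover have "((\<lambda>h. K * \<bar>h\<bar>) \<longlongrightarrow> 0) (at (0::real))"
    by (auto intro!: tendsto_eq_intros)
  then have "\<forall>\<^sub>F h in at (0::real). K * \<bar>h\<bar> < r"
    using \<open>r > 0\<close> by (rule order_tendstoD)
  ultimately show ?thesis
    by (auto elim!: eventually_mono simp: dist_norm subset_iff)
qed

lemma pd_add [simp]:
  "differentiable_along b F q \<Longrightarrow> differentiable_along b G q \<Longrightarrow>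
    pd b (\<lambda>p. F p + G p) q = pd b F q + pd b G q"
  by (intro pd_eqI DERIV_add has_pd)

lemma differentiable_along_add [simp]:
  "differentiable_along b F q \<Longrightarrow> differentiable_along b G q \<Longrightarrow>
    differentiable_along b (\<lambda>p. F p + G p) q"
  using DERIV_add[OF has_pd has_pd] by (rule differentiable_alongI)

lemma pd_diff [simp]:
  "differentiable_along b F q \<Longrightarrow> differentiable_along b G q \<Longrightarrow>
    pd b (\<lambda>p. F p - G p) q = pd b F q - pd b G q"
  by (intro pd_eqI DERIV_diff has_pd)

lemma differentiable_along_diff [simp]:
  "differentiable_along b F q \<Longrightarrow> differentiable_along b G q \<Longrightarrow>
    differentiable_along b (\<lambda>p. F p - G p) q"
  using DERIV_diff[OF has_pd has_pd] by (rule differentiable_alongI)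

lemma pd_mult [simp]:
  assumes "differentiable_along b F q" "differentiable_along b G q"
  shows "pd b (\<lambda>p. F p * G p) q = pd b F q * G q + F q * pd b G q"
  using DERIV_mult[OF has_pd[OF assms(1)] has_pd[OF assms(2)]]
  by (intro pd_eqI) (simp add: algebra_simps)

lemma differentiable_along_mult [simp]:
  "differentiable_along b F q \<Longrightarrow> differentiable_along b G q \<Longrightarrow>
    differentiable_along b (\<lambda>p. F p * G p) q"
  using DERIV_mult[OF has_pd has_pd] by (rule differentiable_alongI)

lemma pd_minus [simp]: "differentiable_along b F q \<Longrightarrow> pd b (\<lambda>p. - F p) q = - pd b F q"
  by (intro pd_eqI DERIV_minus has_pd)

lemma differentiable_along_minus [simp]:
  "differentiable_along b F q \<Longrightarrow> differentiable_along b (\<lambda>p. - F p) q"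
  using DERIV_minus[OF has_pd] by (rule differentiable_alongI)

lemma pd_divide [simp]: "differentiable_along b F q \<Longrightarrow> pd b (\<lambda>p. F p / c) q = pd b F q / c"
  by (intro pd_eqI DERIV_cdivide has_pd)

lemma differentiable_along_divide [simp]:
  "differentiable_along b F q \<Longrightarrow> differentiable_along b (\<lambda>p. F p / c) q"
  using DERIV_cdivide[OF has_pd] by (rule differentiable_alongI)

lemma pd_const [simp]: "pd b (\<lambda>p. c) q = 0"
  by (rule pd_eqI) simp

lemma differentiable_along_const [simp]: "differentiable_along b (\<lambda>p. c) q"
  by (rule differentiable_alongI[of _ _ _ 0]) simp

lemma pd_comp_fst [simp]: "fst b = 0 \<Longrightarrow> pd b (\<lambda>p. c (fst p)) q = 0"
  by (rule pd_eqI) simp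

lemma differentiable_along_comp_fst [simp]: "fst b = 0 \<Longrightarrow> differentiable_along b (\<lambda>p. c (fst p)) q"
  by (rule differentiable_alongI[of _ _ _ 0]) simp

lemma smooth_on_pd:
  assumes "smooth_on U F" "b \<in> Basis"
  shows "smooth_on U (pd b F)"
proof -
  have "iter_pd bs (pd b F) = iter_pd (bs @ [b]) F" for bs
    by (induction bs) auto
  then show ?thesis
    using assms unfolding smooth_on_def by simp
qed

lemma smooth_on_imp_continuous_on: "smooth_on U F \<Longrightarrow> continuous_on U F"
  unfolding smooth_on_def by (metis empty_subsetI empty_set iter_pd.simps(1))

lemma smooth_on_imp_differentiable_along:
  "smooth_on U F \<Longrightarrow> b \<in> Basis \<Longrightarrow> q \<in> U \<Longrightarrow> differentiable_along b F q"
  unfolding smooth_on_def differentiable_along_def by (metis empty_subsetI empty_set iter_pd.simps(1))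

lemma smooth_on_subset: "smooth_on V F \<Longrightarrow> U \<subseteq> V \<Longrightarrow> smooth_on U F"
  unfolding smooth_on_def by (meson continuous_on_subset subsetD)

lemma ex_Basis [simp]: "ex i \<in> Basis"
  by (simp add: ex_def Basis_prod_def zero_prod_def)

lemma ey_Basis [simp]: "ey i \<in> Basis"
  by (simp add: ey_def Basis_prod_def zero_prod_def)

lemma fst_ey [simp]: "fst (ey i) = 0"
  by (simp add: ey_def zero_prod_def)

lemma pd_yc [simp]: "pd b (yc k) q = yc k b"
  by (rule pd_eqI) (auto simp: yc_def intro!: derivative_eq_intros)

lemma differentiable_along_yc [simp]: "differentiable_along b (yc k) q"
  by (rule differentiable_alongI[where D = "yc k b"]) (auto simp: yc_def intro!: derivative_eq_intros)

lemma yc_ey [simp]: "yc k (ey j) = (if (k = 1) = (j = 1) then 1 else 0)"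
  by (simp add: yc_def ey_def)

lemma yc_ex [simp]: "yc k (ex j) = 0"
  by (simp add: yc_def ex_def)

section \<open>Symmetry of second derivatives\<close>

lemma double_difference_mvt:
  fixes F :: "'a::euclidean_space \<Rightarrow> real"
  assumes "h > 0"
    and square: "\<And>s t. 0 \<le> s \<Longrightarrow> s \<le> h \<Longrightarrow> 0 \<le> t \<Longrightarrow> t \<le> h \<Longrightarrow> q + s *\<^sub>R a + t *\<^sub>R b \<in> U"
    and diff_a: "\<And>z. z \<in> U \<Longrightarrow> differentiable_along a F z"
    and diff_ab: "\<And>z. z \<in> U \<Longrightarrow> differentiable_along b (pd a F) z"
  obtains \<sigma> \<tau> where "0 < \<sigma>" "\<sigma> < h" "0 < \<tau>" "\<tau> < h"
    "F (q + h *\<^sub>R a + h *\<^sub>R b) - F (q + h *\<^sub>R a) - F (q + h *\<^sub>R b) + F q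
       = h * h * pd b (pd a F) (q + \<sigma> *\<^sub>R a + \<tau> *\<^sub>R b)"
proof -
  define \<phi> where "\<phi> s = F (q + h *\<^sub>R b + s *\<^sub>R a) - F (q + s *\<^sub>R a)" for s
  have "\<exists>\<sigma>. 0 < \<sigma> \<and> \<sigma> < h \<and> \<phi> h - \<phi> 0 =
      (h - 0) * (pd a F (q + h *\<^sub>R b + \<sigma> *\<^sub>R a) - pd a F (q + \<sigma> *\<^sub>R a))"
  proof (rule MVT2[OF \<open>h > 0\<close>])
    fix s assume "0 \<le> s" "s \<le> h"
    then have "q + h *\<^sub>R b + s *\<^sub>R a \<in> U" "q + s *\<^sub>R a \<in> U"
      using square[of s h] square[of s 0] \<open>h > 0\<close> by (simp_all add: algebra_simps)
    then show "(\<phi> has_real_derivative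
        pd a F (q + h *\<^sub>R b + s *\<^sub>R a) - pd a F (q + s *\<^sub>R a)) (at s)"
      unfolding \<phi>_def by (intro DERIV_diff has_pd_on_line diff_a)
  qed
  then obtain \<sigma> where \<sigma>: "0 < \<sigma>" "\<sigma> < h"
    and "\<phi> h - \<phi> 0 = h * (pd a F (q + \<sigma> *\<^sub>R a + h *\<^sub>R b) - pd a F (q + \<sigma> *\<^sub>R a + 0 *\<^sub>R b))"
    by (auto simp: algebra_simps)
  moreover have "\<exists>\<tau>. 0 < \<tau> \<and> \<tau> < h \<and>
      pd a F (q + \<sigma> *\<^sub>R a + h *\<^sub>R b) - pd a F (q + \<sigma> *\<^sub>R a + 0 *\<^sub>R b)
        = (h - 0) * pd b (pd a F) (q + \<sigma> *\<^sub>R a + \<tau> *\<^sub>R b)"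
    using square \<sigma> by (intro MVT2[OF \<open>h > 0\<close>] has_pd_on_line diff_ab) auto
  ultimately show thesis
    using that \<sigma> unfolding \<phi>_def by (auto simp: algebra_simps)
qed

lemma mixed_pds_agree_nearby:
  fixes F :: "'a::euclidean_space \<Rightarrow> real"
  assumes "open S" "q \<in> S"
    and diff_a: "\<And>z. z \<in> S \<Longrightarrow> differentiable_along a F z"
    and diff_b: "\<And>z. z \<in> S \<Longrightarrow> differentiable_along b F z"
    and diff_ab: "\<And>z. z \<in> S \<Longrightarrow> differentiable_along b (pd a F) z"
    and diff_ba: "\<And>z. z \<in> S \<Longrightarrow> differentiable_along a (pd b F) z"
  obtains z z' where "z \<in> S" "z' \<in> S" "pd b (pd a F) z = pd a (pd b F) z'"
proof -
  have "\<forall>\<^sub>F h in at_right 0. 0 < h \<and> (\<forall>z. norm z \<le> (norm a + norm b) * \<bar>h\<bar> \<longrightarrow> q + z \<in> S)"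
    using assms(1,2) by (intro eventually_conj eventually_at_right_less
        filter_leD[OF at_within_le_at eventually_small_in_open])
  then obtain h where "0 < h" and small: "\<And>z. norm z \<le> (norm a + norm b) * h \<Longrightarrow> q + z \<in> S"
    using eventually_happens'[OF trivial_limit_at_right_real] by force
  have square: "q + s *\<^sub>R c + t *\<^sub>R d \<in> S"
    if "0 \<le> s" "s \<le> h" "0 \<le> t" "t \<le> h" "{c, d} = {a, b}" for s t c d
  proof -
    have "norm (s *\<^sub>R c + t *\<^sub>R d) \<le> s * norm c + t * norm d"
      using norm_triangle_ineq[of "s *\<^sub>R c" "t *\<^sub>R d"] that by simp
    also have "\<dots> \<le> h * norm c + h * norm d"
      using that by (intro add_mono mult_right_mono) auto
    also have "\<dots> \<le> (norm a + norm b) * h"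
      using that \<open>0 < h\<close> by (auto simp: doubleton_eq_iff algebra_simps)
    finally show ?thesis
      using small by (simp add: add.assoc)
  qed
  obtain \<sigma> \<tau> where "0 < \<sigma>" "\<sigma> < h" "0 < \<tau>" "\<tau> < h"
    and ab: "F (q + h *\<^sub>R a + h *\<^sub>R b) - F (q + h *\<^sub>R a) - F (q + h *\<^sub>R b) + F q
       = h * h * pd b (pd a F) (q + \<sigma> *\<^sub>R a + \<tau> *\<^sub>R b)"
    using double_difference_mvt[OF \<open>0 < h\<close>, of q a b S F] square diff_a diff_ab by blast
  moreover obtain \<sigma>' \<tau>' where "0 < \<sigma>'" "\<sigma>' < h" "0 < \<tau>'" "\<tau>' < h"
    and ba: "F (q + h *\<^sub>R b + h *\<^sub>R a) - F (q + h *\<^sub>R b) - F (q + h *\<^sub>R a) + F q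
       = h * h * pd a (pd b F) (q + \<sigma>' *\<^sub>R b + \<tau>' *\<^sub>R a)"
    using double_difference_mvt[OF \<open>0 < h\<close>, of q b a S F] square diff_b diff_ba by blast
  moreover have "pd b (pd a F) (q + \<sigma> *\<^sub>R a + \<tau> *\<^sub>R b) = pd a (pd b F) (q + \<sigma>' *\<^sub>R b + \<tau>' *\<^sub>R a)"
    using ab ba \<open>0 < h\<close> by (auto simp: algebra_simps)
  ultimately show thesis
    using that square[of \<sigma> \<tau> a b] square[of \<sigma>' \<tau>' b a] by (auto simp: insert_commute)
qed

lemma pd_commute:
  fixes F :: "'a::euclidean_space \<Rightarrow> real"
  assumes "open U" "q \<in> U"
    and "\<And>z. z \<in> U \<Longrightarrow> differentiable_along a F z" "\<And>z. z \<in> U \<Longrightarrow> differentiable_along b F z"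
    and "\<And>z. z \<in> U \<Longrightarrow> differentiable_along b (pd a F) z"
    and "\<And>z. z \<in> U \<Longrightarrow> differentiable_along a (pd b F) z"
    and cont_ab: "continuous_on U (pd b (pd a F))"
    and cont_ba: "continuous_on U (pd a (pd b F))"
  shows "pd b (pd a F) q = pd a (pd b F) q"
proof -
  let ?A = "pd b (pd a F) q" and ?B = "pd a (pd b F) q"
  have "\<bar>?A - ?B\<bar> \<le> e" if "e > 0" for e
  proof -
    define S where "S = pd b (pd a F) -` ball ?A (e/2) \<inter> U \<inter> (pd a (pd b F) -` ball ?B (e/2) \<inter> U)"
    have "open S"
      using cont_ab cont_ba \<open>open U\<close> unfolding S_def by (simp add: continuous_on_open_vimage open_Int)
    moreover have "q \<in> S"
      using \<open>q \<in> U\<close> \<open>e > 0\<close> by (simp add: S_def)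
    moreover have "S \<subseteq> U"
      by (auto simp: S_def)
    ultimately have "differentiable_along a F z" "differentiable_along b F z"
      "differentiable_along b (pd a F) z" "differentiable_along a (pd b F) z" if "z \<in> S" for z
      using that assms(3-6) by auto
    with \<open>open S\<close> \<open>q \<in> S\<close> obtain z z' where "z \<in> S" "z' \<in> S"
      and eq: "pd b (pd a F) z = pd a (pd b F) z'"
      by (rule mixed_pds_agree_nearby)
    then have "\<bar>pd b (pd a F) z - ?A\<bar> < e/2" "\<bar>pd a (pd b F) z' - ?B\<bar> < e/2"
      unfolding S_def by (auto simp: dist_real_def abs_minus_commute)
    then show ?thesis
      unfolding eq by linarith
  qed
  then show ?thesis
    using field_le_epsilon[of "\<bar>?A - ?B\<bar>" 0] by simp
qed

lemma smooth_on_pd_commute: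
  assumes "open U" "smooth_on U F" "a \<in> Basis" "b \<in> Basis" "q \<in> U"
  shows "pd b (pd a F) q = pd a (pd b F) q"
  using assms by (intro pd_commute smooth_on_imp_differentiable_along smooth_on_imp_continuous_on
      smooth_on_pd)

section \<open>Euler's relation for homogeneous functions\<close>

lemma mvt_along:
  assumes "\<And>s. \<bar>s\<bar> \<le> \<bar>u\<bar> \<Longrightarrow> differentiable_along b F (w + s *\<^sub>R b)"
  obtains \<sigma> where "\<bar>\<sigma>\<bar> \<le> \<bar>u\<bar>" "F (w + u *\<^sub>R b) - F w = u * pd b F (w + \<sigma> *\<^sub>R b)"
proof -
  let ?\<phi> = "\<lambda>s. F (w + s *\<^sub>R b)"
  have deriv: "(?\<phi> has_real_derivative pd b F (w + s *\<^sub>R b)) (at s)" if "\<bar>s\<bar> \<le> \<bar>u\<bar>" for s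
    using has_pd_on_line assms that by blast
  consider "u = 0" | "u > 0" | "u < 0"
    by linarith
  then show thesis
  proof cases
    case 1
    then show thesis
      using that[of 0] by simp
  next
    case 2
    then obtain \<sigma> where "0 < \<sigma>" "\<sigma> < u" "?\<phi> u - ?\<phi> 0 = (u - 0) * pd b F (w + \<sigma> *\<^sub>R b)"
      using MVT2[of 0 u ?\<phi>] deriv by force
    then show thesis
      using that[of \<sigma>] by simp
  next
    case 3
    then obtain \<sigma> where "u < \<sigma>" "\<sigma> < 0" "?\<phi> 0 - ?\<phi> u = (0 - u) * pd b F (w + \<sigma> *\<^sub>R b)"
      using MVT2[of u 0 ?\<phi>] deriv by force
    then show thesis
      using that[of \<sigma>] by (simp add: algebra_simps)
  qed
qed

lemma tendsto_increment_along:
  assumes "open U" "q \<in> U"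
    and diff_b: "\<And>z. z \<in> U \<Longrightarrow> differentiable_along b F z"
    and cont_b: "continuous_on U (pd b F)"
  shows "((\<lambda>t. (F (q + t *\<^sub>R v + (t * d) *\<^sub>R b) - F (q + t *\<^sub>R v)) / t) \<longlongrightarrow> d * pd b F q) (at 0)"
proof (rule tendstoI)
  fix e :: real assume "e > 0"
  define W where "W = pd b F -` ball (pd b F q) (e / (\<bar>d\<bar> + 1)) \<inter> U"
  have "open W" "q \<in> W"
    using cont_b \<open>open U\<close> \<open>q \<in> U\<close> \<open>e > 0\<close>
    by (auto simp: W_def continuous_on_open_vimage add_pos_nonneg)
  then have "\<forall>\<^sub>F t in at 0. t \<noteq> 0 \<and> (\<forall>z. norm z \<le> (norm v + \<bar>d\<bar> * norm b) * \<bar>t\<bar> \<longrightarrow> q + z \<in> W)"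
    by (intro eventually_conj eventually_neq_at_within eventually_small_in_open)
  then show "\<forall>\<^sub>F t in at 0.
      dist ((F (q + t *\<^sub>R v + (t * d) *\<^sub>R b) - F (q + t *\<^sub>R v)) / t) (d * pd b F q) < e"
  proof (rule eventually_mono, elim conjE)
    fix t :: real
    assume "t \<noteq> 0" and small: "\<forall>z. norm z \<le> (norm v + \<bar>d\<bar> * norm b) * \<bar>t\<bar> \<longrightarrow> q + z \<in> W"
    have inW: "q + t *\<^sub>R v + \<sigma> *\<^sub>R b \<in> W" if "\<bar>\<sigma>\<bar> \<le> \<bar>t * d\<bar>" for \<sigma>
    proof -
      have "norm (t *\<^sub>R v + \<sigma> *\<^sub>R b) \<le> \<bar>t\<bar> * norm v + \<bar>\<sigma>\<bar> * norm b"
        using norm_triangle_ineq[of "t *\<^sub>R v" "\<sigma> *\<^sub>R b"] by simp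
      also have "\<dots> \<le> \<bar>t\<bar> * norm v + \<bar>t * d\<bar> * norm b"
        using that by (intro add_left_mono mult_right_mono) auto
      also have "\<dots> = (norm v + \<bar>d\<bar> * norm b) * \<bar>t\<bar>"
        by (simp add: abs_mult algebra_simps)
      finally show ?thesis
        using small by (simp add: add.assoc)
    qed
    obtain \<sigma> where \<sigma>: "\<bar>\<sigma>\<bar> \<le> \<bar>t * d\<bar>"
      "F (q + t *\<^sub>R v + (t * d) *\<^sub>R b) - F (q + t *\<^sub>R v) = (t * d) * pd b F (q + t *\<^sub>R v + \<sigma> *\<^sub>R b)"
      using mvt_along[of "t * d" b F "q + t *\<^sub>R v"] inW diff_b W_def by auto
    have "\<bar>pd b F (q + t *\<^sub>R v + \<sigma> *\<^sub>R b) - pd b F q\<bar> < e / (\<bar>d\<bar> + 1)"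
      using inW[OF \<sigma>(1)] by (simp add: W_def dist_real_def abs_minus_commute)
    then have "(\<bar>d\<bar> + 1) * \<bar>pd b F (q + t *\<^sub>R v + \<sigma> *\<^sub>R b) - pd b F q\<bar> < e"
      by (simp add: pos_less_divide_eq mult.commute add_pos_nonneg)
    then have "\<bar>d\<bar> * \<bar>pd b F (q + t *\<^sub>R v + \<sigma> *\<^sub>R b) - pd b F q\<bar> < e"
      by (smt (verit) abs_ge_zero mult_right_mono)
    then show "dist ((F (q + t *\<^sub>R v + (t * d) *\<^sub>R b) - F (q + t *\<^sub>R v)) / t) (d * pd b F q) < e"
      using \<sigma>(2) \<open>t \<noteq> 0\<close> by (simp add: dist_real_def abs_mult[symmetric] right_diff_distrib)
  qed
qed

lemma has_pd_lincomb:
  assumes "open U" "q \<in> U" "differentiable_along a F q"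
    and "\<And>z. z \<in> U \<Longrightarrow> differentiable_along b F z" "continuous_on U (pd b F)"
  shows "((\<lambda>t. F (q + t *\<^sub>R (c *\<^sub>R a + d *\<^sub>R b))) has_real_derivative c * pd a F q + d * pd b F q) (at 0)"
proof -
  have "((\<lambda>s. F (q + s *\<^sub>R a)) has_real_derivative pd a F q) (at (0 * c))"
    using has_pd[OF \<open>differentiable_along a F q\<close>] by simp
  then have "((\<lambda>t. F (q + (t * c) *\<^sub>R a)) has_real_derivative pd a F q * c) (at 0)"
    by (rule DERIV_chain2) (auto intro!: derivative_eq_intros)
  then have "((\<lambda>t. (F (q + t *\<^sub>R (c *\<^sub>R a)) - F q) / t) \<longlongrightarrow> c * pd a F q) (at 0)"
    unfolding DERIV_def by (simp add: mult.commute)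
  with tendsto_increment_along[OF assms(1,2,4,5), of "c *\<^sub>R a" d]
  have "((\<lambda>t. (F (q + t *\<^sub>R (c *\<^sub>R a) + (t * d) *\<^sub>R b) - F (q + t *\<^sub>R (c *\<^sub>R a))) / t
      + (F (q + t *\<^sub>R (c *\<^sub>R a)) - F q) / t) \<longlongrightarrow> d * pd b F q + c * pd a F q) (at 0)"
    by (rule tendsto_add)
  moreover have "(F (q + t *\<^sub>R (c *\<^sub>R a) + (t * d) *\<^sub>R b) - F (q + t *\<^sub>R (c *\<^sub>R a))) / t
      + (F (q + t *\<^sub>R (c *\<^sub>R a)) - F q) / t
      = (F (q + (0 + t) *\<^sub>R (c *\<^sub>R a + d *\<^sub>R b)) - F (q + 0 *\<^sub>R (c *\<^sub>R a + d *\<^sub>R b))) / t" for t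
    by (simp add: add_divide_distrib[symmetric] scaleR_add_right algebra_simps)
  ultimately show ?thesis
    unfolding DERIV_def by (simp add: add.commute)
qed

lemma pd_radial_homogeneous:
  fixes F :: "'a::euclidean_space \<times> 'b::euclidean_space \<Rightarrow> real"
  assumes "\<And>t. t > 0 \<Longrightarrow> F (x, t *\<^sub>R y) = t ^ n * F (x, y)"
  shows "pd (0, y) F (x, y) = real n * F (x, y)"
proof (rule pd_eqI)
  have "\<forall>\<^sub>F t in nhds (0::real). t \<in> {-1<..}"
    by (rule eventually_nhds_in_open) (auto simp: open_greaterThan)
  then have ev: "\<forall>\<^sub>F t in nhds 0. (1 + t) ^ n * F (x, y) = F ((x, y) + t *\<^sub>R (0, y))"
  proof (rule eventually_mono)
    fix t :: real assume "t \<in> {-1<..}"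
    then have "F (x, (1 + t) *\<^sub>R y) = (1 + t) ^ n * F (x, y)"
      using assms by simp
    then show "(1 + t) ^ n * F (x, y) = F ((x, y) + t *\<^sub>R (0, y))"
      by (simp add: scaleR_add_left)
  qed
  have "((\<lambda>t. (1 + t) ^ n * F (x, y)) has_real_derivative real n * F (x, y)) (at 0)"
    by (auto intro!: derivative_eq_intros)
  then show "((\<lambda>t. F ((x, y) + t *\<^sub>R (0, y))) has_real_derivative real n * F (x, y)) (at 0)"
    using DERIV_cong_ev[OF refl ev refl] by blast
qed

lemma pd_fibre_homogeneous:
  fixes F :: "'a::euclidean_space \<times> 'b::euclidean_space \<Rightarrow> real"
  assumes hom: "\<And>y t. y \<noteq> 0 \<Longrightarrow> t > 0 \<Longrightarrow> F (x, t *\<^sub>R y) = t ^ Suc n * F (x, y)"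
    and "y \<noteq> 0" "s > 0" and diff: "differentiable_along (0, e) F (x, y)"
  shows "pd (0, e) F (x, s *\<^sub>R y) = s ^ n * pd (0, e) F (x, y)"
proof (rule pd_eqI)
  have "\<forall>\<^sub>F t in nhds 0. y + t *\<^sub>R ((1 / s) *\<^sub>R e) \<in> - {0}"
    using \<open>y \<noteq> 0\<close> by (intro eventually_line_in_open) auto
  then have ev: "\<forall>\<^sub>F t in nhds 0. s ^ Suc n * F ((x, y) + (t / s) *\<^sub>R (0, e)) = F ((x, s *\<^sub>R y) + t *\<^sub>R (0, e))"
  proof (rule eventually_mono)
    fix t assume "y + t *\<^sub>R ((1 / s) *\<^sub>R e) \<in> - {0}"
    then have "F (x, s *\<^sub>R (y + (t / s) *\<^sub>R e)) = s ^ Suc n * F (x, y + (t / s) *\<^sub>R e)"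
      using hom \<open>s > 0\<close> by simp
    moreover have "(x, s *\<^sub>R y) + t *\<^sub>R (0, e) = (x, s *\<^sub>R (y + (t / s) *\<^sub>R e))"
      using \<open>s > 0\<close> by (simp add: scaleR_add_right)
    ultimately show "s ^ Suc n * F ((x, y) + (t / s) *\<^sub>R (0, e)) = F ((x, s *\<^sub>R y) + t *\<^sub>R (0, e))"
      by simp
  qed
  have "((\<lambda>u. F ((x, y) + u *\<^sub>R (0, e))) has_real_derivative pd (0, e) F (x, y)) (at (0 / s))"
    using has_pd[OF diff] by simp
  then have "((\<lambda>t. F ((x, y) + (t / s) *\<^sub>R (0, e))) has_real_derivative pd (0, e) F (x, y) * (1 / s)) (at 0)"
    using \<open>s > 0\<close> by (rule_tac DERIV_chain2) (auto intro!: derivative_eq_intros)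
  from DERIV_cmult[OF this, of "s ^ Suc n"]
  have "((\<lambda>t. s ^ Suc n * F ((x, y) + (t / s) *\<^sub>R (0, e))) has_real_derivative
      s ^ n * pd (0, e) F (x, y)) (at 0)"
    using \<open>s > 0\<close> by simp
  then show "((\<lambda>t. F ((x, s *\<^sub>R y) + t *\<^sub>R (0, e))) has_real_derivative
      s ^ n * pd (0, e) F (x, y)) (at 0)"
    using DERIV_cong_ev[OF refl ev refl] by blast
qed

lemma euler_relation:
  assumes "open U" "smooth_on U g" "q \<in> U"
    and "\<And>t. t > 0 \<Longrightarrow> g (fst q, t *\<^sub>R snd q) = t ^ n * g q"
  shows "(\<Sum>i\<in>{1,2}. yc i q * dy i g q) = real n * g q"
proof -
  have radial: "(0, snd q) = yc 1 q *\<^sub>R ey 1 + yc 2 q *\<^sub>R ey 2"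
    by (cases q) (auto simp: ey_def yc_def zero_prod_def)
  have "pd (0, snd q) g q = yc 1 q * pd (ey 1) g q + yc 2 q * pd (ey 2) g q"
    unfolding radial using assms(1-3)
    by (intro pd_eqI has_pd_lincomb smooth_on_imp_differentiable_along smooth_on_imp_continuous_on
        smooth_on_pd ey_Basis)
  moreover have "pd (0, snd q) g (fst q, snd q) = real n * g (fst q, snd q)"
    using assms(4) by (intro pd_radial_homogeneous) simp
  ultimately show ?thesis
    by (simp add: dy_def)
qed

section \<open>Landsberg metrics of the spray\<close>

locale landsberg_lagrangian =
  fixes M :: "(real \<times> real) set" and l1 l2 :: "real \<times> real \<Rightarrow> real" and f E :: "pt \<Rightarrow> real"
    and U :: "pt set"
  assumes f_smooth: "smooth_on (M \<times> (UNIV - {0})) f"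
    and f_homogeneous: "\<forall>x\<in>M. \<forall>y. y \<noteq> 0 \<longrightarrow> (\<forall>t>0. f (x, t *\<^sub>R y) = t\<^sup>2 * f (x, y))"
    and open_U: "open U" and U_subset: "U \<subseteq> M \<times> (UNIV - {0})"
    and E_smooth: "smooth_on U E"
    and E_euler: "\<And>p. p \<in> U \<Longrightarrow> (\<Sum>i\<in>{1,2}. yc i p * dy i E p) - 2 * E p = 0"
    and E_landsberg: "\<And>p i j k. p \<in> U \<Longrightarrow> i \<in> {1,2} \<Longrightarrow> j \<in> {1,2} \<Longrightarrow> k \<in> {1,2} \<Longrightarrow>
          dx i (gmet E j k) p
          - (\<Sum>l\<in>{1,2}. Gam l1 l2 f l i p * dy l (gmet E j k) p)
          - (\<Sum>l\<in>{1,2}. Gam3 l1 l2 f l i k p * gmet E l j p)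
          - (\<Sum>l\<in>{1,2}. Gam3 l1 l2 f l i j p * gmet E l k p) = 0"
begin

definition lam :: "nat \<Rightarrow> real \<times> real \<Rightarrow> real" where
  "lam l = (if l = 1 then l1 else l2)"

definition dE_lam :: "pt \<Rightarrow> real" where
  "dE_lam p = (\<Sum>l\<in>{1,2}. lam l (fst p) * dy l E p)"

lemma f_smooth_U: "smooth_on U f"
  using f_smooth U_subset by (rule smooth_on_subset)

lemmas [simp] = E_smooth f_smooth_U smooth_on_pd smooth_on_imp_differentiable_along[of U]

lemma Gam_eq: "Gam l1 l2 f l i p = -(1/2) * (lam l (fst p) * dy i f p)" if "p \<in> U"
proof -
  have "sprayf l1 l2 f l = (\<lambda>p. lam l (fst p) * f p)"
    by (simp add: fun_eq_iff sprayf_def lam_def)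
  then show ?thesis
    using that by (simp add: Gam_def dy_def)
qed

lemma Gam3_eq: "Gam3 l1 l2 f l i k p = -(1/2) * (lam l (fst p) * dy k (dy i f) p)" if "p \<in> U"
proof -
  have "Gam3 l1 l2 f l i k p = pd (ey k) (\<lambda>p. -(1/2) * (lam l (fst p) * dy i f p)) p"
    unfolding Gam3_def dy_def by (rule pd_cong_open[OF open_U that]) (simp add: Gam_eq dy_def)
  then show ?thesis
    using that by (simp add: dy_def)
qed

lemma gmet_commute: "gmet E j k p = gmet E k j p" if "p \<in> U"
  using smooth_on_pd_commute[OF open_U E_smooth _ _ that] by (simp add: gmet_def dy_def)

lemma dy_gmet_swap: "dy j (gmet E l k) p = dy l (gmet E j k) p" if "p \<in> U"
  using smooth_on_pd_commute[OF open_U _ _ _ that] by (simp add: gmet_def dy_def)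

lemma dx_gmet: "dx i (gmet E j k) p = dy j (dy k (dx i E)) p" if "p \<in> U"
proof -
  have "pd (ex i) (pd (ey j) (pd (ey k) E)) p = pd (ey j) (pd (ex i) (pd (ey k) E)) p"
    using smooth_on_pd_commute[OF open_U _ _ _ that] by simp
  also have "\<dots> = pd (ey j) (pd (ey k) (pd (ex i) E)) p"
    using open_U that by (rule pd_cong_open) (simp add: smooth_on_pd_commute[OF open_U])
  finally show ?thesis
    by (simp add: gmet_def dy_def dx_def)
qed

lemma E_euler_dy: "(\<Sum>k\<in>{1,2}. yc k p * gmet E j k p) = dy j E p" if "p \<in> U" "j \<in> {1,2}"
proof -
  have "pd (ey j) (\<lambda>q. (\<Sum>i\<in>{1,2}. yc i q * dy i E q) - 2 * E q) p = pd (ey j) (\<lambda>q. 0) p"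
    using open_U that(1) by (rule pd_cong_open) (use E_euler in simp)
  then show ?thesis
    using that by (auto simp: gmet_def dy_def)
qed

lemma E_euler_dyy: "(\<Sum>k\<in>{1,2}. yc k p * dy l (gmet E j k) p) = 0" if "p \<in> U" "j \<in> {1,2}" "l \<in> {1,2}"
proof -
  have "pd (ey l) (\<lambda>q. (\<Sum>k\<in>{1,2}. yc k q * gmet E j k q)) p = pd (ey l) (dy j E) p"
    using open_U that(1) by (rule pd_cong_open) (use E_euler_dy that in simp)
  then show ?thesis
    using that gmet_commute[OF that(1), of j l] by (auto simp: gmet_def dy_def)
qed

lemma E_quadratic: "(\<Sum>j\<in>{1,2}. \<Sum>k\<in>{1,2}. yc j p * yc k p * gmet E j k p) = 2 * E p" if "p \<in> U"
proof -
  have "(\<Sum>j\<in>{1,2}. \<Sum>k\<in>{1,2}. yc j p * yc k p * gmet E j k p)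
      = (\<Sum>j\<in>{1,2}. yc j p * (\<Sum>k\<in>{1,2}. yc k p * gmet E j k p))"
    by (simp add: algebra_simps)
  also have "\<dots> = (\<Sum>j\<in>{1,2}. yc j p * dy j E p)"
    using E_euler_dy[OF that] by simp
  also have "\<dots> = 2 * E p"
    using E_euler[OF that] by simp
  finally show ?thesis .
qed

lemma dx_E_quadratic:
  "2 * dx i E p = (\<Sum>j\<in>{1,2}. \<Sum>k\<in>{1,2}. yc j p * yc k p * dx i (gmet E j k) p)" if "p \<in> U"
proof -
  have "pd (ex i) (\<lambda>q. 2 * E q) p = pd (ex i) (\<lambda>q. \<Sum>j\<in>{1,2}. \<Sum>k\<in>{1,2}. yc j q * yc k q * gmet E j k q) p"
    using open_U that by (rule pd_cong_open) (use E_quadratic in simp)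
  then show ?thesis
    using that by (simp add: gmet_def dy_def dx_def)
qed

lemma f_euler: "(\<Sum>k\<in>{1,2}. yc k p * dy k (dy i f) p) = dy i f p" if "p \<in> U"
proof -
  obtain x y where p: "p = (x, y)"
    by (cases p)
  then have "x \<in> M" "y \<noteq> 0"
    using that U_subset by auto
  have ey: "ey i = (0, snd (ey i))"
    by (metis fst_ey prod.collapse)
  have hom: "f (x, t *\<^sub>R y') = t ^ Suc 1 * f (x, y')" if "y' \<noteq> 0" "t > 0" for y' t
    using f_homogeneous \<open>x \<in> M\<close> that by (simp add: numeral_2_eq_2 del: split_paired_All)
  have "pd (ey i) f (x, t *\<^sub>R y) = t ^ 1 * pd (ey i) f (x, y)" if "t > 0" for t
    using \<open>y \<noteq> 0\<close> \<open>t > 0\<close> \<open>p \<in> U\<close>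
    by (subst (1 2) ey, intro pd_fibre_homogeneous[OF hom]) (simp_all add: p flip: ey)
  then have "(\<Sum>k\<in>{1,2}. yc k p * dy k (dy i f) p) = real 1 * dy i f p"
    using open_U f_smooth_U that by (intro euler_relation) (simp_all add: p dy_def)
  then show ?thesis
    by simp
qed

lemma Gam3_contract: "(\<Sum>k\<in>{1,2}. yc k p * Gam3 l1 l2 f l i k p) = Gam l1 l2 f l i p" if "p \<in> U"
proof -
  have "(\<Sum>k\<in>{1,2}. yc k p * Gam3 l1 l2 f l i k p)
      = -(1/2) * lam l (fst p) * (\<Sum>k\<in>{1,2}. yc k p * dy k (dy i f) p)"
    using that by (simp add: Gam3_eq algebra_simps)
  then show ?thesis
    using that f_euler[OF that, of i] by (simp add: Gam_eq)
qed

lemma dx_E_eq: "dx i E p = (\<Sum>l\<in>{1,2}. Gam l1 l2 f l i p * dy l E p)"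
  if p: "p \<in> U" and i: "i \<in> {1,2}"
proof -
  have landsberg: "dx i (gmet E j k) p = (\<Sum>l\<in>{1,2}. Gam l1 l2 f l i p * dy l (gmet E j k) p)
      + (\<Sum>l\<in>{1,2}. Gam3 l1 l2 f l i k p * gmet E l j p) + (\<Sum>l\<in>{1,2}. Gam3 l1 l2 f l i j p * gmet E l k p)"
    if "j \<in> {1,2}" "k \<in> {1,2}" for j k
    using E_landsberg[OF p i that] by linarith
  let ?y = "\<lambda>k. yc k p" and ?\<Gamma> = "\<lambda>l i. Gam l1 l2 f l i p" and ?\<Gamma>3 = "\<lambda>l i k. Gam3 l1 l2 f l i k p"
  have "2 * dx i E p = (\<Sum>j\<in>{1,2}. \<Sum>k\<in>{1,2}. ?y j * ?y k * dx i (gmet E j k) p)"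
    using p by (rule dx_E_quadratic)
  also have "\<dots> = (\<Sum>j\<in>{1,2}. \<Sum>k\<in>{1,2}. ?y j * ?y k *
      ((\<Sum>l\<in>{1,2}. ?\<Gamma> l i * dy l (gmet E j k) p) + (\<Sum>l\<in>{1,2}. ?\<Gamma>3 l i k * gmet E l j p)
        + (\<Sum>l\<in>{1,2}. ?\<Gamma>3 l i j * gmet E l k p)))"
    by (intro sum.cong refl) (simp add: landsberg)
  also have "\<dots> = (\<Sum>l\<in>{1,2}. ?\<Gamma> l i * (\<Sum>j\<in>{1,2}. ?y j * (\<Sum>k\<in>{1,2}. ?y k * dy l (gmet E j k) p)))
      + (\<Sum>l\<in>{1,2}. (\<Sum>k\<in>{1,2}. ?y k * ?\<Gamma>3 l i k) * (\<Sum>j\<in>{1,2}. ?y j * gmet E l j p))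
      + (\<Sum>l\<in>{1,2}. (\<Sum>j\<in>{1,2}. ?y j * ?\<Gamma>3 l i j) * (\<Sum>k\<in>{1,2}. ?y k * gmet E l k p))"
    by (simp add: algebra_simps)
  also have "\<dots> = (\<Sum>l\<in>{1,2}. ?\<Gamma> l i * 0) + (\<Sum>l\<in>{1,2}. ?\<Gamma> l i * dy l E p)
      + (\<Sum>l\<in>{1,2}. ?\<Gamma> l i * dy l E p)"
  proof -
    have "(\<Sum>j\<in>{1,2}. ?y j * (\<Sum>k\<in>{1,2}. ?y k * dy l (gmet E j k) p)) = 0" if "l \<in> {1,2}" for l
      using that by (intro sum.neutral ballI) (simp only: E_euler_dyy[OF p] mult_zero_right)
    then show ?thesis
      using Gam3_contract[OF p] E_euler_dy[OF p]
      by (intro arg_cong2[where f = "(+)"] sum.cong refl) simp_all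
  qed
  finally show ?thesis
    by (simp add: algebra_simps)
qed

lemma dx_E_eq_dE_lam: "dx i E p = -(1/2) * (dy i f p * dE_lam p)" if "p \<in> U" "i \<in> {1,2}"
  using that by (simp add: dx_E_eq Gam_eq dE_lam_def algebra_simps)

lemma differentiable_along_dE_lam [simp]: "q \<in> U \<Longrightarrow> differentiable_along (ey k) dE_lam q"
  unfolding dE_lam_def dy_def by simp

lemma dy_dE_lam: "dy k dE_lam q = (\<Sum>l\<in>{1,2}. lam l (fst q) * gmet E l k q)" if "q \<in> U"
  unfolding dE_lam_def dy_def gmet_def using that gmet_commute[OF that] by (simp add: gmet_def dy_def)

lemma differentiable_along_dy_dE_lam [simp]:
  "q \<in> U \<Longrightarrow> differentiable_along (ey j) (pd (ey k) dE_lam) q"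
  using differentiable_along_cong_open[OF open_U _ dy_dE_lam[unfolded dy_def]]
  by (simp add: gmet_def dy_def)

lemma dyy_dE_lam: "dy j (dy k dE_lam) q = (\<Sum>l\<in>{1,2}. lam l (fst q) * dy l (gmet E j k) q)"
  if "q \<in> U"
proof -
  have "dy j (dy k dE_lam) q = (\<Sum>l\<in>{1,2}. lam l (fst q) * dy j (gmet E l k) q)"
    unfolding dy_def[of j] using open_U that
    by (subst pd_cong_open[OF _ _ dy_dE_lam]) (simp_all add: gmet_def dy_def)
  then show ?thesis
    by (simp add: dy_gmet_swap[OF that, of j _ k])
qed

lemma dyy_dx_E:
  assumes p: "p \<in> U" and i: "i \<in> {1,2}"
  shows "dy j (dy k (dx i E)) p = -(1/2) * (dy j (dy k (dy i f)) p * dE_lam p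
    + dy k (dy i f) p * dy j dE_lam p + dy j (dy i f) p * dy k dE_lam p + dy i f p * dy j (dy k dE_lam) p)"
proof -
  have "dy k (dx i E) q = -(1/2) * (dy k (dy i f) q * dE_lam q + dy i f q * dy k dE_lam q)" if "q \<in> U" for q
  proof -
    have "dy k (dx i E) q = pd (ey k) (\<lambda>q. -(1/2) * (dy i f q * dE_lam q)) q"
      unfolding dy_def by (rule pd_cong_open[OF open_U that]) (use dx_E_eq_dE_lam[OF _ i] in \<open>simp add: dy_def\<close>)
    then show ?thesis
      using that by (simp add: dy_def algebra_simps)
  qed
  then have "dy j (dy k (dx i E)) p
      = pd (ey j) (\<lambda>q. -(1/2) * (dy k (dy i f) q * dE_lam q + dy i f q * dy k dE_lam q)) p"
    unfolding dy_def[of j] by (rule pd_cong_open[OF open_U p])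
  also have "\<dots> = -(1/2) * (dy j (dy k (dy i f)) p * dE_lam p
    + dy k (dy i f) p * dy j dE_lam p + dy j (dy i f) p * dy k dE_lam p + dy i f p * dy j (dy k dE_lam) p)"
    using p by (simp add: dy_def algebra_simps add_divide_distrib)
  finally show ?thesis .
qed

lemma f_third_dE_lam: "dy j (dy k (dy i f)) p * dE_lam p = 0"
  if p: "p \<in> U" and "i \<in> {1,2}" "j \<in> {1,2}" "k \<in> {1,2}"
proof -
  have "0 = dx i (gmet E j k) p
      - (\<Sum>l\<in>{1,2}. Gam l1 l2 f l i p * dy l (gmet E j k) p)
      - (\<Sum>l\<in>{1,2}. Gam3 l1 l2 f l i k p * gmet E l j p)
      - (\<Sum>l\<in>{1,2}. Gam3 l1 l2 f l i j p * gmet E l k p)"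
    using E_landsberg[OF that] by simp
  also have "\<dots> = -(1/2) * (dy j (dy k (dy i f)) p * dE_lam p)"
    using that
    by (simp add: dx_gmet dyy_dx_E Gam_eq Gam3_eq dy_dE_lam dyy_dE_lam algebra_simps)
  finally show ?thesis
    by simp
qed

lemma dE_lam_eq_0:
  assumes "\<forall>q\<in>U. \<exists>i\<in>{1,2}. \<exists>j\<in>{1,2}. \<exists>k\<in>{1,2}. dy i (dy j (dy k f)) q \<noteq> 0" and "p \<in> U"
  shows "dE_lam p = 0"
proof -
  obtain i j k where "i \<in> {1,2}" "j \<in> {1,2}" "k \<in> {1,2}" "dy i (dy j (dy k f)) p \<noteq> 0"
    using assms by blast
  then show ?thesis
    using f_third_dE_lam[OF \<open>p \<in> U\<close>, of k i j] by simp
qed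

lemma gmet_lam_lam_eq_0:
  assumes "\<And>q. q \<in> U \<Longrightarrow> dE_lam q = 0" and p: "p \<in> U"
  shows "(\<Sum>i\<in>{1,2}. \<Sum>j\<in>{1,2}. gmet E i j p * lam i (fst p) * lam j (fst p)) = 0"
proof -
  have "dy i dE_lam p = dy i (\<lambda>q. 0) p" for i
    unfolding dy_def using open_U p by (rule pd_cong_open) (rule assms(1))
  then have "(\<Sum>j\<in>{1,2}. lam j (fst p) * gmet E j i p) = 0" for i
    using dy_dE_lam[OF p] by (simp add: dy_def)
  moreover have "(\<Sum>i\<in>{1,2}. \<Sum>j\<in>{1,2}. gmet E i j p * lam i (fst p) * lam j (fst p))
      = (\<Sum>j\<in>{1,2}. lam j (fst p) * (\<Sum>i\<in>{1,2}. lam i (fst p) * gmet E i j p))"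
    by (simp add: algebra_simps)
  ultimately show ?thesis
    by (simp only: mult_zero_right sum.neutral_const)
qed

end

lemma landsberg_metrizableE:
  assumes "landsberg_metrizable l1 l2 f U"
    and "smooth_on (M \<times> (UNIV - {0})) f"
    and "\<forall>x\<in>M. \<forall>y. y \<noteq> 0 \<longrightarrow> (\<forall>t>0. f (x, t *\<^sub>R y) = t\<^sup>2 * f (x, y))"
    and "open U" and "U \<subseteq> M \<times> (UNIV - {0})"
  obtains E where "landsberg_lagrangian M l1 l2 f E U"
    and "\<And>p v. p \<in> U \<Longrightarrow> (v 1, v 2) \<noteq> (0, 0) \<Longrightarrow>
      (\<Sum>i\<in>{1,2}. \<Sum>j\<in>{1,2}. gmet E i j p * v i * v j) > 0"
  using assms unfolding landsberg_metrizable_def by (blast intro: that landsberg_lagrangian.intro)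

theorem mainTheorem13:
  fixes M :: "(real \<times> real) set"
    and l1 l2 :: "real \<times> real \<Rightarrow> real"
    and f :: "pt \<Rightarrow> real"
    and U :: "pt set"
  assumes "open M"
    and "smooth_on M l1" and "smooth_on M l2"
    and "smooth_on (M \<times> (UNIV - {0})) f"
    and "\<forall>x\<in>M. \<forall>y. y \<noteq> 0 \<longrightarrow> (\<forall>t>0. f (x, t *\<^sub>R y) = t\<^sup>2 * f (x, y))"
    and "open U" and "U \<noteq> {}" and "U \<subseteq> M \<times> (UNIV - {0})"
    and "\<forall>p\<in>U. (l1 (fst p), l2 (fst p)) \<noteq> (0, 0)"
    and "\<forall>p\<in>U. \<exists>i\<in>{1,2}. \<exists>j\<in>{1,2}. \<exists>k\<in>{1,2}. dy i (dy j (dy k f)) p \<noteq> 0"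
  shows "\<not> landsberg_metrizable l1 l2 f U"
proof
  assume "landsberg_metrizable l1 l2 f U"
  then obtain E where E: "landsberg_lagrangian M l1 l2 f E U"
    and posdef: "\<And>p v. p \<in> U \<Longrightarrow> (v 1, v 2) \<noteq> (0, 0) \<Longrightarrow>
      (\<Sum>i\<in>{1,2}. \<Sum>j\<in>{1,2}. gmet E i j p * v i * v j) > 0"
    using assms(4-6,8) by (rule landsberg_metrizableE) blast
  interpret landsberg_lagrangian M l1 l2 f E U
    by (rule E)
  obtain p where "p \<in> U"
    using \<open>U \<noteq> {}\<close> by blast
  have "(lam 1 (fst p), lam 2 (fst p)) \<noteq> (0, 0)"
    using assms(9) \<open>p \<in> U\<close> by (simp add: lam_def)
  then have "(\<Sum>i\<in>{1,2}. \<Sum>j\<in>{1,2}. gmet E i j p * lam i (fst p) * lam j (fst p)) > 0"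
    by (rule posdef[OF \<open>p \<in> U\<close>])
  moreover have "(\<Sum>i\<in>{1,2}. \<Sum>j\<in>{1,2}. gmet E i j p * lam i (fst p) * lam j (fst p)) = 0"
    using dE_lam_eq_0[OF assms(10)] \<open>p \<in> U\<close> by (rule gmet_lam_lam_eq_0)
  ultimately show False
    by simp
qed

end
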